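(* Let $G$ be a proper interval graph with a proper vertex ordering $<$ and let $e,e'\in E(G)$. Then $\{e,e'\}$ is a uniquely restricted matching in $G$ if and only if $l(e),l(e')$ are distinct and nonadjacent or $r(e),r(e')$ are distinct and nonadjacent.
   Context: Graphs are finite, simple, undirected. A proper interval graph is a graph with an interval representation (closed real intervals, adjacency iff intersection for distinct vertices) in which no interval strictly contains another. An ordering $<$ of $V(G)$ is a proper vertex ordering if for all $u<v<w$, $uw\in E(G)$ implies $uv,vw\in E(G)$. For an edge $e=uv$, $l(e)=\min_<\{u,v\}$ and $r(e)=\max_<\{u,v\}$. A matching is a set of pairwise vertex-disjoint edges; it is uniquely restricted if no other matching of $G$ matches exactly the same vertex set. *)

theory Defs
  imports Complex_Main
begin

definition simple_graph :: "'a set \<Rightarrow> 'a set set \<Rightarrow> bool" where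
  "simple_graph V E \<longleftrightarrow> finite V \<and>
     (\<forall>e\<in>E. \<exists>u v. e = {u, v} \<and> u \<in> V \<and> v \<in> V \<and> u \<noteq> v)"

definition proper_interval_graph :: "'a set \<Rightarrow> 'a set set \<Rightarrow> bool" where
  "proper_interval_graph V E \<longleftrightarrow> simple_graph V E \<and>
     (\<exists>a b :: 'a \<Rightarrow> real.
        (\<forall>v\<in>V. a v \<le> b v) \<and>
        (\<forall>u\<in>V. \<forall>v\<in>V. u \<noteq> v \<longrightarrow> ({u, v} \<in> E \<longleftrightarrow> {a u..b u} \<inter> {a v..b v} \<noteq> {})) \<and>
        (\<forall>u\<in>V. \<forall>v\<in>V. \<not> ({a u..b u} \<subset> {a v..b v})))"

definition proper_vertex_ordering :: "'a set \<Rightarrow> 'a set set \<Rightarrow> 'a rel \<Rightarrow> bool" where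
  "proper_vertex_ordering V E r \<longleftrightarrow> r \<subseteq> V \<times> V \<and> strict_linear_order_on V r \<and>
     (\<forall>u\<in>V. \<forall>v\<in>V. \<forall>w\<in>V. (u, v) \<in> r \<and> (v, w) \<in> r \<and> {u, w} \<in> E \<longrightarrow>
        {u, v} \<in> E \<and> {v, w} \<in> E)"

definition lend :: "'a rel \<Rightarrow> 'a set \<Rightarrow> 'a" where
  "lend r e = (THE x. x \<in> e \<and> (\<forall>y\<in>e. y \<noteq> x \<longrightarrow> (x, y) \<in> r))"

definition rend :: "'a rel \<Rightarrow> 'a set \<Rightarrow> 'a" where
  "rend r e = (THE x. x \<in> e \<and> (\<forall>y\<in>e. y \<noteq> x \<longrightarrow> (y, x) \<in> r))"

definition matching :: "'a set set \<Rightarrow> 'a set set \<Rightarrow> bool" where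
  "matching E M \<longleftrightarrow> M \<subseteq> E \<and> (\<forall>e\<in>M. \<forall>f\<in>M. e \<noteq> f \<longrightarrow> e \<inter> f = {})"

definition uniquely_restricted_matching :: "'a set set \<Rightarrow> 'a set set \<Rightarrow> bool" where
  "uniquely_restricted_matching E M \<longleftrightarrow> matching E M \<and>
     (\<forall>M'. matching E M' \<and> \<Union>M' = \<Union>M \<longrightarrow> M' = M)"

end

theory Submission
  imports Defs
begin

text \<open>Write \<open>u < v\<close> for the proper vertex ordering. If \<open>e = ab\<close> and \<open>e' = cd\<close> with
  \<open>a < b\<close>, \<open>c < d\<close> and \<open>a \<le> c\<close>, then either the edges meet, in which case \<open>c \<le> b\<close> and the
  ordering forces \<open>a = c\<close> or \<open>ac \<in> E\<close>, and \<open>b = d\<close> or \<open>bd \<in> E\<close>; or the four vertices are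
  distinct, and \<open>{e, e'}\<close> is uniquely restricted iff neither of the two other perfect
  matchings \<open>{ac, bd}\<close>, \<open>{ad, bc}\<close> of \<open>{a, b, c, d}\<close> lies in \<open>G\<close>. The ordering gives
  \<open>ad \<in> E \<Longrightarrow> ac, bd \<in> E\<close>, so only \<open>{ac, bd}\<close> matters.\<close>

lemma simple_graph_edgeE:
  assumes "simple_graph V E" "f \<in> E"
  obtains u v where "f = {u, v}" "u \<in> V" "v \<in> V" "u \<noteq> v"
  using assms unfolding simple_graph_def by blast

lemma simple_graph_edge_throughE:
  assumes "simple_graph V E" "f \<in> E" "x \<in> f"
  obtains y where "f = {x, y}" "y \<noteq> x"
  using assms by (elim simple_graph_edgeE) (auto simp: insert_commute)

lemma pairwise_disjoint_cover_eq:
  assumes disj: "\<And>f g. f \<in> M \<Longrightarrow> g \<in> M \<Longrightarrow> f \<noteq> g \<Longrightarrow> f \<inter> g = {}"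
    and nonempty: "{} \<notin> M" and "A \<in> M" "B \<in> M" "\<Union>M = A \<union> B"
  shows "M = {A, B}"
proof -
  have "C = A \<or> C = B" if "C \<in> M" for C
  proof -
    from that nonempty obtain x where "x \<in> C" by (metis all_not_in_conv)
    then have "x \<in> A \<or> x \<in> B" using that \<open>\<Union>M = A \<union> B\<close> by blast
    then show ?thesis using disj[OF that \<open>A \<in> M\<close>] disj[OF that \<open>B \<in> M\<close>] \<open>x \<in> C\<close> by blast
  qed
  then show ?thesis using \<open>A \<in> M\<close> \<open>B \<in> M\<close> by blast
qed

lemma matching_of_four_containing_edge:
  assumes "simple_graph V E" "matching E M" "\<Union>M = {a, b, c, d}" "distinct [a, b, c, d]"
    and "{a, b} \<in> M"
  shows "M = {{a, b}, {c, d}}"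
proof -
  have disj: "\<And>f g. f \<in> M \<Longrightarrow> g \<in> M \<Longrightarrow> f \<noteq> g \<Longrightarrow> f \<inter> g = {}"
    using \<open>matching E M\<close> unfolding matching_def by blast
  have edges: "M \<subseteq> E" using \<open>matching E M\<close> unfolding matching_def by blast
  obtain f where "f \<in> M" "c \<in> f" using \<open>\<Union>M = {a, b, c, d}\<close> by blast
  then obtain z where f: "f = {c, z}" "z \<noteq> c"
    using edges simple_graph_edge_throughE[OF \<open>simple_graph V E\<close>] by blast
  have "f \<inter> {a, b} = {}" using disj[OF \<open>f \<in> M\<close> \<open>{a, b} \<in> M\<close>] \<open>c \<in> f\<close> assms(4) by auto
  moreover have "z \<in> {a, b, c, d}" using \<open>f \<in> M\<close> f \<open>\<Union>M = {a, b, c, d}\<close> by blast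
  ultimately have "f = {c, d}" using f by auto
  moreover have "{} \<notin> M" using edges simple_graph_edgeE[OF \<open>simple_graph V E\<close>] by blast
  ultimately show ?thesis
    using pairwise_disjoint_cover_eq[of M, OF disj _ \<open>{a, b} \<in> M\<close> \<open>f \<in> M\<close>] \<open>\<Union>M = {a, b, c, d}\<close>
    by auto
qed

lemma perfect_matchings_of_four:
  assumes "simple_graph V E" "matching E M" "\<Union>M = {a, b, c, d}" "distinct [a, b, c, d]"
  shows "M = {{a, b}, {c, d}} \<or> M = {{a, c}, {b, d}} \<or> M = {{a, d}, {b, c}}"
proof -
  obtain f where "f \<in> M" "a \<in> f" using \<open>\<Union>M = {a, b, c, d}\<close> by blast
  moreover have "f \<in> E" using \<open>f \<in> M\<close> assms(2) unfolding matching_def by blast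
  ultimately obtain y where y: "{a, y} \<in> M" "y \<noteq> a"
    using simple_graph_edge_throughE[OF assms(1)] by metis
  then have "y \<in> {a, b, c, d}" using \<open>\<Union>M = {a, b, c, d}\<close> by blast
  with y consider "{a, b} \<in> M" | "{a, c} \<in> M" | "{a, d} \<in> M" by blast
  then show ?thesis
  proof cases
    case 1
    from matching_of_four_containing_edge[OF assms 1] show ?thesis by blast
  next
    case 2
    have "\<Union>M = {a, c, b, d}" "distinct [a, c, b, d]" using assms(3,4) by auto
    from matching_of_four_containing_edge[OF assms(1,2) this 2] show ?thesis by blast
  next
    case 3
    have "\<Union>M = {a, d, b, c}" "distinct [a, d, b, c]" using assms(3,4) by auto
    from matching_of_four_containing_edge[OF assms(1,2) this 3] show ?thesis by blast
  qed
qed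

lemma not_uniquely_restricted_if_same_cover:
  assumes "matching E M'" "\<Union>M' = \<Union>M" "M' \<noteq> M"
  shows "\<not> uniquely_restricted_matching E M"
  using assms unfolding uniquely_restricted_matching_def by blast

lemma not_uniquely_restricted_if_overlapping:
  assumes "f \<noteq> g" "f \<inter> g \<noteq> {}"
  shows "\<not> uniquely_restricted_matching E {f, g}"
  using assms unfolding uniquely_restricted_matching_def matching_def by blast

lemma not_uniquely_restricted_if_crossing_edges:
  assumes "distinct [a, b, c, d]" "{a, c} \<in> E" "{b, d} \<in> E"
  shows "\<not> uniquely_restricted_matching E {{a, b}, {c, d}}"
proof (rule not_uniquely_restricted_if_same_cover)
  show "matching E {{a, c}, {b, d}}" using assms unfolding matching_def by auto
  show "\<Union>{{a, c}, {b, d}} = \<Union>{{a, b}, {c, d}}" by blast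
  show "{{a, c}, {b, d}} \<noteq> {{a, b}, {c, d}}" using assms(1) by (auto simp: doubleton_eq_iff)
qed

lemma uniquely_restricted_two_disjoint_edges_iff:
  assumes "simple_graph V E" "{a, b} \<in> E" "{c, d} \<in> E" "distinct [a, b, c, d]"
  shows "uniquely_restricted_matching E {{a, b}, {c, d}} \<longleftrightarrow>
    \<not> ({a, c} \<in> E \<and> {b, d} \<in> E) \<and> \<not> ({a, d} \<in> E \<and> {b, c} \<in> E)"
proof
  assume "uniquely_restricted_matching E {{a, b}, {c, d}}"
  moreover have "distinct [a, b, d, c]" using assms(4) by auto
  ultimately show "\<not> ({a, c} \<in> E \<and> {b, d} \<in> E) \<and> \<not> ({a, d} \<in> E \<and> {b, c} \<in> E)"
    using not_uniquely_restricted_if_crossing_edges[of a b c d E] assms(4)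
      not_uniquely_restricted_if_crossing_edges[of a b d c E] by (auto simp: insert_commute)
next
  assume no_other: "\<not> ({a, c} \<in> E \<and> {b, d} \<in> E) \<and> \<not> ({a, d} \<in> E \<and> {b, c} \<in> E)"
  have "M = {{a, b}, {c, d}}" if "matching E M" "\<Union>M = {a, b, c, d}" for M
  proof -
    have "M \<subseteq> E" using \<open>matching E M\<close> unfolding matching_def by blast
    then show ?thesis using perfect_matchings_of_four[OF assms(1) that assms(4)] no_other by auto
  qed
  moreover have "matching E {{a, b}, {c, d}}" using assms(2-4) unfolding matching_def by auto
  ultimately show "uniquely_restricted_matching E {{a, b}, {c, d}}"
    unfolding uniquely_restricted_matching_def by auto
qed

context
  fixes V :: "'a set" and E :: "'a set set" and r :: "'a rel"
  assumes graph: "simple_graph V E" and ordering: "proper_vertex_ordering V E r"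
begin

lemma ordering_trans: "(x, y) \<in> r \<Longrightarrow> (y, z) \<in> r \<Longrightarrow> (x, z) \<in> r"
  and ordering_irrefl: "(x, x) \<notin> r"
  and ordering_total: "x \<in> V \<Longrightarrow> y \<in> V \<Longrightarrow> x \<noteq> y \<Longrightarrow> (x, y) \<in> r \<or> (y, x) \<in> r"
  using ordering
  unfolding proper_vertex_ordering_def strict_linear_order_on_def trans_def irrefl_on_def total_on_def
  by blast+

lemma ordering_in_vertices: "(x, y) \<in> r \<Longrightarrow> x \<in> V" "(x, y) \<in> r \<Longrightarrow> y \<in> V"
  using ordering unfolding proper_vertex_ordering_def by blast+

lemma edge_between:
  assumes "(u, v) \<in> r" "(v, w) \<in> r" "{u, w} \<in> E"
  shows "{u, v} \<in> E" "{v, w} \<in> E"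
  using assms ordering unfolding proper_vertex_ordering_def by blast+

lemma oriented_edgeE:
  assumes "f \<in> E"
  obtains u v where "f = {u, v}" "(u, v) \<in> r"
proof -
  obtain u v where "f = {u, v}" "u \<in> V" "v \<in> V" "u \<noteq> v" using graph assms by (rule simple_graph_edgeE)
  with ordering_total that show ?thesis by (metis insert_commute)
qed

lemma lend_rend_oriented_edge:
  assumes "(a, b) \<in> r"
  shows "lend r {a, b} = a" "rend r {a, b} = b"
proof -
  have "(b, a) \<notin> r" using assms ordering_trans ordering_irrefl by blast
  then show "lend r {a, b} = a" "rend r {a, b} = b"
    unfolding lend_def rend_def using assms by (auto intro: the_equality)
qed

lemma ends_adjacent_if_start_inside:
  assumes "(a, b) \<in> r" "(c, d) \<in> r" "{a, b} \<in> E" "{c, d} \<in> E"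
    and "a = c \<or> (a, c) \<in> r" "c = b \<or> (c, b) \<in> r"
  shows "a = c \<or> {a, c} \<in> E" "b = d \<or> {b, d} \<in> E"
proof -
  show "a = c \<or> {a, c} \<in> E" using assms(3,5,6) edge_between(1)[OF _ _ assms(3)] by blast
  have "b \<in> V" "d \<in> V" using assms(1,2) by (blast intro: ordering_in_vertices)+
  show "b = d \<or> {b, d} \<in> E"
  proof (cases "b = d")
    case False
    then consider "(b, d) \<in> r" | "(d, b) \<in> r" using ordering_total \<open>b \<in> V\<close> \<open>d \<in> V\<close> by blast
    then show ?thesis
    proof cases
      case 1
      then show ?thesis using assms(4,6) edge_between(2)[OF _ 1 assms(4)] by blast
    next
      case 2
      have "(a, d) \<in> r" using assms(2,5) ordering_trans by blast
      then show ?thesis using edge_between(2)[OF _ 2 assms(3)] by (simp add: insert_commute)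
    qed
  qed simp
qed

lemma ends_adjacent_if_crossing:
  assumes "(a, b) \<in> r" "{a, b} \<in> E" "(a, c) \<in> r" "(c, d) \<in> r" "{a, d} \<in> E" "b \<noteq> d"
  shows "{a, c} \<in> E" "{b, d} \<in> E"
proof -
  show "{a, c} \<in> E" using edge_between(1) assms(3-5) .
  have "b \<in> V" "d \<in> V" using assms(1,4) by (blast intro: ordering_in_vertices)+
  then consider "(b, d) \<in> r" | "(d, b) \<in> r" using ordering_total assms(6) by blast
  then show "{b, d} \<in> E"
  proof cases
    case 1
    show ?thesis using edge_between(2)[OF assms(1) 1 assms(5)] .
  next
    case 2
    have "(a, d) \<in> r" using assms(3,4) ordering_trans by blast
    then show ?thesis using edge_between(2)[OF _ 2 assms(2)] by (simp add: insert_commute)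
  qed
qed

lemma uniquely_restricted_oriented_pair_iff:
  assumes "(a, b) \<in> r" "(c, d) \<in> r" "{a, b} \<in> E" "{c, d} \<in> E" "{a, b} \<noteq> {c, d}"
    and "a = c \<or> (a, c) \<in> r"
  shows "uniquely_restricted_matching E {{a, b}, {c, d}} \<longleftrightarrow>
    (a \<noteq> c \<and> {a, c} \<notin> E) \<or> (b \<noteq> d \<and> {b, d} \<notin> E)"
proof (cases "{a, b} \<inter> {c, d} = {}")
  case False
  have "a \<noteq> d" using assms(2,6) ordering_trans ordering_irrefl by blast
  with False consider "a = c" | "b = c" | "b = d" by blast
  then have "c = b \<or> (c, b) \<in> r" by cases (use assms(1,2) in simp_all)
  then have "a = c \<or> {a, c} \<in> E" "b = d \<or> {b, d} \<in> E"
    using ends_adjacent_if_start_inside[OF assms(1-4,6)] by blast+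
  then show ?thesis using not_uniquely_restricted_if_overlapping[OF assms(5) False] by blast
next
  case True
  have "a \<noteq> b" "c \<noteq> d" using assms(1,2) ordering_irrefl by blast+
  with True have distinct: "distinct [a, b, c, d]" by auto
  then have "(a, c) \<in> r" using assms(6) by simp
  then have "{a, d} \<in> E \<Longrightarrow> {a, c} \<in> E \<and> {b, d} \<in> E"
    using ends_adjacent_if_crossing[OF assms(1,3) _ assms(2)] distinct by simp
  then show ?thesis
    using uniquely_restricted_two_disjoint_edges_iff[OF graph assms(3,4) distinct] distinct by auto
qed

lemma uniquely_restricted_pair_iff_ends:
  assumes "e \<in> E" "e' \<in> E" "e \<noteq> e'"
  shows "uniquely_restricted_matching E {e, e'} \<longleftrightarrow>
    (lend r e \<noteq> lend r e' \<and> {lend r e, lend r e'} \<notin> E) \<or>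
    (rend r e \<noteq> rend r e' \<and> {rend r e, rend r e'} \<notin> E)"
proof -
  obtain a b where e: "e = {a, b}" "(a, b) \<in> r" using assms(1) by (rule oriented_edgeE)
  obtain c d where e': "e' = {c, d}" "(c, d) \<in> r" using assms(2) by (rule oriented_edgeE)
  have "a \<in> V" "c \<in> V" using e(2) e'(2) by (blast intro: ordering_in_vertices)+
  then consider "a = c \<or> (a, c) \<in> r" | "(c, a) \<in> r" using ordering_total by blast
  then show ?thesis
  proof cases
    case 1
    show ?thesis using uniquely_restricted_oriented_pair_iff[OF e(2) e'(2) _ _ _ 1] assms e e'
      by (simp add: lend_rend_oriented_edge)
  next
    case 2
    show ?thesis using uniquely_restricted_oriented_pair_iff[OF e'(2) e(2) _ _ _ disjI2[OF 2]] assms e e'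
      by (auto simp: lend_rend_oriented_edge insert_commute)
  qed
qed

end

theorem lemma3:
  fixes V :: "'a set" and E :: "'a set set" and r :: "'a rel" and e e' :: "'a set"
  assumes "proper_interval_graph V E"
    and "proper_vertex_ordering V E r"
    and "e \<in> E" and "e' \<in> E" and "e \<noteq> e'"
  shows "uniquely_restricted_matching E {e, e'} \<longleftrightarrow>
         (lend r e \<noteq> lend r e' \<and> {lend r e, lend r e'} \<notin> E) \<or>
         (rend r e \<noteq> rend r e' \<and> {rend r e, rend r e'} \<notin> E)"
proof -
  have "simple_graph V E" using assms(1) unfolding proper_interval_graph_def by blast
  then show ?thesis using uniquely_restricted_pair_iff_ends assms(2-5) by blast
qed

end
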